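(* Let $\mathcal{H}$ be a complex Hilbert space and let $R,S\in\mathbb{B}(\mathcal{H})$ be invertible (with bounded inverses) such that $D(R)\le\|R^{-1}\|^{-2}$ and $D(S)\le\|S^{-1}\|^{-2}$. Then $\omega(RS)\le 2\,\omega(R)\,\omega(S)$.
   Context: $\mathbb{B}(\mathcal{H})$ denotes the bounded linear operators on $\mathcal{H}$. $\omega(A)=\sup\{|\langle Ax,x\rangle| : \|x\|=1\}$ is the numerical radius, and for $A\in\mathbb{B}(\mathcal{H})$, $D(A)=2\min(\|A_1\|^2,\|A_2\|^2)$ where $A_1=\frac{A+A^*}{2}$, $A_2=\frac{A-A^*}{2i}$. *)

theory Defs
  imports "HOL-Analysis.Analysis"
begin

class complex_hilbert = banach +
  fixes scaleC :: "complex \<Rightarrow> 'a \<Rightarrow> 'a"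
    and cinner :: "'a \<Rightarrow> 'a \<Rightarrow> complex"
  assumes scaleC_add_right: "scaleC a (x + y) = scaleC a x + scaleC a y"
    and scaleC_add_left: "scaleC (a + b) x = scaleC a x + scaleC b x"
    and scaleC_scaleC: "scaleC a (scaleC b x) = scaleC (a * b) x"
    and scaleC_one: "scaleC 1 x = x"
    and scaleR_scaleC: "scaleR r x = scaleC (complex_of_real r) x"
    and cinner_commute: "cinner x y = cnj (cinner y x)"
    and cinner_add_left: "cinner (x + y) z = cinner x z + cinner y z"
    and cinner_scaleC_left: "cinner (scaleC a x) y = a * cinner x y"
    and cinner_eq_zero_iff: "cinner x x = 0 \<longleftrightarrow> x = 0"
    and norm_cinner: "norm x = sqrt (Re (cinner x x))"

definition bop :: "('a::complex_hilbert \<Rightarrow> 'a) \<Rightarrow> bool" where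
  "bop A \<longleftrightarrow> bounded_linear A \<and> (\<forall>c x. A (scaleC c x) = scaleC c (A x))"

definition adjoint_op :: "('a::complex_hilbert \<Rightarrow> 'a) \<Rightarrow> ('a \<Rightarrow> 'a)" where
  "adjoint_op A = (SOME B. \<forall>x y. cinner (A x) y = cinner x (B y))"

text \<open>Numerical radius  sup { |<A x, x>| : ||x|| = 1 }  (0 for the trivial space).\<close>
definition num_radius :: "('a::complex_hilbert \<Rightarrow> 'a) \<Rightarrow> real" where
  "num_radius A = Sup (insert 0 {cmod (cinner (A x) x) | x. norm x = 1})"

definition re_part :: "('a::complex_hilbert \<Rightarrow> 'a) \<Rightarrow> ('a \<Rightarrow> 'a)" where
  "re_part A = (\<lambda>x. scaleC (1/2) (A x + adjoint_op A x))"

definition im_part :: "('a::complex_hilbert \<Rightarrow> 'a) \<Rightarrow> ('a \<Rightarrow> 'a)" where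
  "im_part A = (\<lambda>x. scaleC (1/(2*\<i>)) (A x - adjoint_op A x))"

definition D_op :: "('a::complex_hilbert \<Rightarrow> 'a) \<Rightarrow> real" where
  "D_op A = 2 * min ((onorm (re_part A))\<^sup>2) ((onorm (im_part A))\<^sup>2)"

end

theory Submission
  imports Defs
begin

text \<open>
  If \<open>A\<close> has a bounded inverse then \<open>\<parallel>x\<parallel> \<le> \<parallel>A\<^sup>-\<^sup>1\<parallel> \<parallel>A\<^sup>* x\<parallel>\<close>, so the hypothesis on
  \<open>D(A)\<close> gives \<open>D(A) \<parallel>x\<parallel>\<^sup>2 \<le> \<parallel>A\<^sup>* x\<parallel>\<^sup>2\<close>. By the parallelogram law
  \<open>\<parallel>A x\<parallel>\<^sup>2 + \<parallel>A\<^sup>* x\<parallel>\<^sup>2 = 2 (\<parallel>A\<^sub>1 x\<parallel>\<^sup>2 + \<parallel>A\<^sub>2 x\<parallel>\<^sup>2)\<close>, hence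
  \<open>\<parallel>A x\<parallel>\<^sup>2 \<le> 2 max(\<parallel>A\<^sub>1\<parallel>\<^sup>2, \<parallel>A\<^sub>2\<parallel>\<^sup>2) \<parallel>x\<parallel>\<^sup>2 \<le> 2 \<omega>(A)\<^sup>2 \<parallel>x\<parallel>\<^sup>2\<close>, because the real part of
  \<open>c A\<close> has norm at most \<open>\<omega>(A)\<close> whenever \<open>|c| = 1\<close> (polarization). Thus
  \<open>\<parallel>A\<parallel> \<le> \<surd>2 \<omega>(A)\<close> for \<open>A = R, S\<close>, and \<open>\<omega>(RS) \<le> \<parallel>R\<parallel> \<parallel>S\<parallel> \<le> 2 \<omega>(R) \<omega>(S)\<close>.

  The adjoint, which is chosen by Hilbert's choice operator, exists by the Riesz representation
  theorem: the point of least norm on the closed hyperplane \<open>f = 1\<close> is orthogonal to the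
  kernel of \<open>f\<close>.
\<close>

section \<open>Complex inner product spaces\<close>

lemma cinner_zero_left [simp]: "cinner 0 y = 0"
  using cinner_add_left[of 0 0 y] by simp

lemma cinner_minus_left [simp]: "cinner (- x) y = - cinner x y"
  using cinner_add_left[of x "- x" y] by (simp add: eq_neg_iff_add_eq_0 add.commute)

lemma cinner_diff_left: "cinner (x - y) z = cinner x z - cinner y z"
  using cinner_add_left[of x "- y" z] by simp

lemma cinner_zero_right [simp]: "cinner x 0 = 0"
  by (subst cinner_commute) simp

lemma cinner_add_right: "cinner x (y + z) = cinner x y + cinner x z"
  by (subst (1 2 3) cinner_commute) (simp add: cinner_add_left)

lemma cinner_diff_right: "cinner x (y - z) = cinner x y - cinner x z"
  by (subst (1 2 3) cinner_commute) (simp add: cinner_diff_left)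

lemma cinner_scaleC_right: "cinner x (scaleC a y) = cnj a * cinner x y"
  by (subst (1 2) cinner_commute) (simp add: cinner_scaleC_left)

lemma cinner_scaleR_left: "cinner (scaleR r x) y = of_real r * cinner x y"
  by (simp add: scaleR_scaleC cinner_scaleC_left)

lemma cinner_scaleR_right: "cinner x (scaleR r y) = of_real r * cinner x y"
  by (simp add: scaleR_scaleC cinner_scaleC_right)

lemma power2_norm_eq_cinner: "(norm x)\<^sup>2 = Re (cinner x x)"
  using norm_cinner[of x] norm_ge_zero[of x] by (metis real_sqrt_ge_0_iff real_sqrt_pow2)

lemma Im_cinner_self [simp]: "Im (cinner x x) = 0"
  using cinner_commute[of x x] by (metis Reals_cnj_iff complex_is_Real_iff)

lemma cinner_self_eq_power2_norm: "cinner x x = complex_of_real ((norm x)\<^sup>2)"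
  by (simp add: power2_norm_eq_cinner complex_eq_iff)

lemma Re_cinner_commute: "Re (cinner y x) = Re (cinner x y)"
  by (subst cinner_commute) simp

lemma scaleC_zero_right [simp]: "scaleC a 0 = 0"
  using scaleC_add_right[of a 0 0] by simp

lemma scaleC_zero_left [simp]: "scaleC 0 x = 0"
  using scaleC_add_left[of 0 0 x] by simp

lemma scaleC_minus_left: "scaleC (- a) x = - scaleC a x"
  using scaleC_add_left[of a "- a" x] by (simp add: eq_neg_iff_add_eq_0 add.commute)

lemma scaleC_minus_right: "scaleC a (- x) = - scaleC a x"
  using scaleC_add_right[of a x "- x"] by (simp add: eq_neg_iff_add_eq_0 add.commute)

lemma scaleC_diff_right: "scaleC a (x - y) = scaleC a x - scaleC a y"
  using scaleC_add_right[of a x "- y"] by (simp add: scaleC_minus_right)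

lemma scaleC_scaleR_commute: "scaleC a (scaleR r x) = scaleR r (scaleC a x)"
  by (simp add: scaleR_scaleC scaleC_scaleC mult.commute)

lemma norm_scaleC: "norm (scaleC a x) = cmod a * norm x"
proof -
  have "(norm (scaleC a x))\<^sup>2 = Re (cinner (scaleC a x) (scaleC a x))"
    by (rule power2_norm_eq_cinner)
  also have "\<dots> = Re (a * cnj a * cinner x x)"
    by (simp add: cinner_scaleC_left cinner_scaleC_right mult.assoc)
  also have "\<dots> = (cmod a * norm x)\<^sup>2"
    by (simp add: cinner_self_eq_power2_norm complex_mult_cnj cmod_power2 power_mult_distrib)
  finally show ?thesis
    by (simp add: power2_eq_iff_nonneg)
qed

lemma bounded_linear_scaleC: "bounded_linear (scaleC c)"
  by (rule bounded_linear_intro[where K = "cmod c"])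
    (auto simp: scaleC_add_right scaleC_scaleR_commute norm_scaleC mult.commute)

lemma power2_norm_add: "(norm (x + y))\<^sup>2 = (norm x)\<^sup>2 + (norm y)\<^sup>2 + 2 * Re (cinner x y)"
  by (simp add: power2_norm_eq_cinner cinner_add_left cinner_add_right Re_cinner_commute[of y x])

lemma power2_norm_diff: "(norm (x - y))\<^sup>2 = (norm x)\<^sup>2 + (norm y)\<^sup>2 - 2 * Re (cinner x y)"
  by (simp add: power2_norm_eq_cinner cinner_diff_left cinner_diff_right Re_cinner_commute[of y x])

lemma parallelogram_law:
  "(norm (x + y))\<^sup>2 + (norm (x - y))\<^sup>2 = 2 * (norm x)\<^sup>2 + 2 * (norm (y::'a::complex_hilbert))\<^sup>2"
  by (simp add: power2_norm_add power2_norm_diff)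

lemma Re_cinner_le_norm_mult: "Re (cinner x y) \<le> norm x * norm y"
proof (cases "y = 0")
  case False
  define p where "p = Re (cinner x y)"
  define b where "b = norm y"
  have b: "b > 0"
    using False by (simp add: b_def)
  have "0 \<le> (norm (x - scaleR (p / b\<^sup>2) y))\<^sup>2"
    by simp
  also have "\<dots> = (norm x)\<^sup>2 + (p / b\<^sup>2)\<^sup>2 * b\<^sup>2 - 2 * (p / b\<^sup>2) * p"
    by (simp add: power2_norm_diff cinner_scaleR_right p_def b_def power_mult_distrib power_divide)
  also have "\<dots> = (norm x)\<^sup>2 - p\<^sup>2 / b\<^sup>2"
    using b by (simp add: power2_eq_square divide_simps)
  finally have "p\<^sup>2 \<le> (norm x * b)\<^sup>2"
    using b by (simp add: field_simps power_mult_distrib)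
  then show ?thesis
    using b by (simp add: p_def b_def abs_le_square_iff [symmetric])
qed simp

lemma cauchy_schwarz: "cmod (cinner x y) \<le> norm x * norm y"
proof -
  define c where "c = cinner x y"
  have "cmod c = Re (cnj (sgn c) * c)"
  proof (cases "c = 0")
    case False
    have "cnj (sgn c) * c = complex_of_real ((cmod c)\<^sup>2 / cmod c)"
      by (simp add: sgn_eq complex_mult_cnj cmod_power2 mult.commute)
    then show ?thesis
      using False by (simp add: power2_eq_square)
  qed simp
  also have "\<dots> = Re (cinner x (scaleC (sgn c) y))"
    by (simp add: cinner_scaleC_right c_def)
  also have "\<dots> \<le> norm x * norm (scaleC (sgn c) y)"
    by (rule Re_cinner_le_norm_mult)
  also have "\<dots> \<le> norm x * norm y"
    by (cases "c = 0") (simp_all add: norm_scaleC norm_sgn)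
  finally show ?thesis
    by (simp add: c_def)
qed

lemma cinner_right_ext: "(\<And>x. cinner x u = cinner x v) \<Longrightarrow> u = v"
  using cinner_eq_zero_iff[of "u - v"] by (simp add: cinner_diff_right)

section \<open>Riesz representation\<close>

lemma Cauchy_if_power2_dist_le:
  fixes X :: "nat \<Rightarrow> 'a::metric_space"
  assumes e: "e \<longlonglongrightarrow> 0" and dist: "\<And>m n. (dist (X m) (X n))\<^sup>2 \<le> e m + e n"
  shows "Cauchy X"
proof (rule metric_CauchyI)
  fix \<epsilon> :: real
  assume "0 < \<epsilon>"
  then obtain N where N: "\<And>n. n \<ge> N \<Longrightarrow> e n < \<epsilon>\<^sup>2 / 2"
    using order_tendstoD(2)[OF e, of "\<epsilon>\<^sup>2 / 2"] by (auto simp: eventually_sequentially)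
  have "dist (X m) (X n) < \<epsilon>" if "m \<ge> N" "n \<ge> N" for m n
  proof -
    have "(dist (X m) (X n))\<^sup>2 < \<epsilon>\<^sup>2"
      using dist[of m n] N[OF \<open>m \<ge> N\<close>] N[OF \<open>n \<ge> N\<close>] by linarith
    then show ?thesis
      using \<open>0 < \<epsilon>\<close> by (simp add: power_less_imp_less_base)
  qed
  then show "\<exists>M. \<forall>m\<ge>M. \<forall>n\<ge>M. dist (X m) (X n) < \<epsilon>"
    by blast
qed

lemma power2_norm_diff_le_near_min_norm:
  fixes x y :: "'a::complex_hilbert"
  assumes "scaleR (1/2) (x + y) \<in> S" and min: "\<And>u. u \<in> S \<Longrightarrow> d \<le> norm u" and "0 \<le> d"
    and x: "norm x \<le> d + e" "0 \<le> e" "e \<le> 1"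
    and y: "norm y \<le> d + e'" "0 \<le> e'" "e' \<le> 1"
  shows "(norm (x - y))\<^sup>2 \<le> (4 * d + 2) * (e + e')"
proof -
  have "2 * d \<le> norm (x + y)"
    using min[OF assms(1)] by simp
  then have "(2 * d)\<^sup>2 \<le> (norm (x + y))\<^sup>2"
    using \<open>0 \<le> d\<close> by (intro power_mono) auto
  moreover have "(norm x)\<^sup>2 \<le> (d + e)\<^sup>2" "(norm y)\<^sup>2 \<le> (d + e')\<^sup>2"
    using x y by (auto intro!: power_mono)
  ultimately have "(norm (x - y))\<^sup>2 \<le> 2 * (d + e)\<^sup>2 + 2 * (d + e')\<^sup>2 - 4 * d\<^sup>2"
    using parallelogram_law[of x y] by (simp add: power_mult_distrib)
  also have "\<dots> = 4 * d * (e + e') + 2 * (e * e) + 2 * (e' * e')"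
    by (simp add: power2_eq_square algebra_simps)
  also have "\<dots> \<le> (4 * d + 2) * (e + e')"
    using mult_left_le[OF \<open>e \<le> 1\<close> \<open>0 \<le> e\<close>] mult_left_le[OF \<open>e' \<le> 1\<close> \<open>0 \<le> e'\<close>]
    by (simp add: algebra_simps)
  finally show ?thesis .
qed

lemma min_norm_point_exists:
  fixes S :: "'a::complex_hilbert set"
  assumes "closed S" "S \<noteq> {}"
    and midpoint: "\<And>x y. x \<in> S \<Longrightarrow> y \<in> S \<Longrightarrow> scaleR (1/2) (x + y) \<in> S"
  shows "\<exists>x0\<in>S. \<forall>u\<in>S. norm x0 \<le> norm u"
proof -
  define d where "d = Inf (norm ` S)"
  have min: "d \<le> norm u" if "u \<in> S" for u
    unfolding d_def by (rule cInf_lower) (auto intro: that bdd_belowI[of _ 0])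
  have "0 \<le> d"
    unfolding d_def using \<open>S \<noteq> {}\<close> by (auto intro!: cInf_greatest)
  define e :: "nat \<Rightarrow> real" where "e n = inverse (real (Suc n))" for n
  have e: "0 \<le> e n" "e n \<le> 1" for n
    by (auto simp: e_def field_simps)
  have "\<exists>x\<in>S. norm x < d + e n" for n
    using cInf_lessD[of "norm ` S" "d + e n"] \<open>S \<noteq> {}\<close> by (auto simp: d_def e_def)
  then obtain xs where xs: "\<And>n. xs n \<in> S" "\<And>n. norm (xs n) < d + e n"
    by metis
  have "Cauchy xs"
  proof (rule Cauchy_if_power2_dist_le)
    show "(\<lambda>n. (4 * d + 2) * e n) \<longlonglongrightarrow> 0"
      unfolding e_def by (intro tendsto_mult_right_zero LIMSEQ_inverse_real_of_nat)
    show "(dist (xs m) (xs n))\<^sup>2 \<le> (4 * d + 2) * e m + (4 * d + 2) * e n" for m n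
      using power2_norm_diff_le_near_min_norm[OF midpoint[OF xs(1) xs(1)] min \<open>0 \<le> d\<close>]
        xs(2)[of m] xs(2)[of n] e[of m] e[of n]
      by (simp add: dist_norm distrib_left less_imp_le)
  qed
  then obtain x0 where lim: "xs \<longlonglongrightarrow> x0"
    using Cauchy_convergent_iff convergent_def by blast
  have "x0 \<in> S"
    using closed_sequentially[OF \<open>closed S\<close> xs(1) lim] .
  moreover have "norm x0 \<le> d"
  proof (rule LIMSEQ_le)
    show "(\<lambda>n. norm (xs n)) \<longlonglongrightarrow> norm x0"
      by (rule tendsto_norm[OF lim])
    show "(\<lambda>n. d + e n) \<longlonglongrightarrow> d"
      unfolding e_def by (rule LIMSEQ_inverse_real_of_nat_add)
    show "\<exists>N. \<forall>n\<ge>N. norm (xs n) \<le> d + e n"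
      using xs(2) less_imp_le by blast
  qed
  ultimately show ?thesis
    using min by force
qed

lemma cinner_eq_0_if_min_norm:
  assumes min: "\<And>t. norm x0 \<le> norm (x0 + scaleC t v)"
  shows "cinner v x0 = 0"
proof -
  define c where "c = cinner v x0"
  define \<epsilon> where "\<epsilon> = 1 / ((norm v)\<^sup>2 + 1)"
  have \<epsilon>: "0 < \<epsilon>" "\<epsilon> * (norm v)\<^sup>2 < 1"
    by (auto simp: \<epsilon>_def divide_simps add_nonneg_pos)
  \<comment> \<open>A short step from \<open>x0\<close> in direction \<open>-cnj c v\<close> would decrease the norm unless \<open>c = 0\<close>.\<close>
  define t where "t = - of_real \<epsilon> * cnj c"
  have "Re (cinner x0 (scaleC t v)) = - \<epsilon> * (cmod c)\<^sup>2"
  proof -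
    have "cinner x0 (scaleC t v) = - of_real \<epsilon> * (c * cnj c)"
      by (simp add: cinner_scaleC_right c_def t_def cinner_commute[of x0 v])
    then show ?thesis
      by (simp add: complex_mult_cnj cmod_power2 flip: of_real_mult)
  qed
  moreover have "(cmod t)\<^sup>2 = \<epsilon>\<^sup>2 * (cmod c)\<^sup>2"
    using \<epsilon> by (simp add: t_def norm_mult power_mult_distrib)
  moreover have "(norm x0)\<^sup>2 \<le> (norm (x0 + scaleC t v))\<^sup>2"
    using min[of t] by (auto intro!: power_mono)
  then have "(norm x0)\<^sup>2 \<le> (norm x0)\<^sup>2 + (cmod t)\<^sup>2 * (norm v)\<^sup>2 + 2 * Re (cinner x0 (scaleC t v))"
    by (simp add: power2_norm_add norm_scaleC power_mult_distrib)
  ultimately have "0 \<le> \<epsilon> * (cmod c)\<^sup>2 * (\<epsilon> * (norm v)\<^sup>2 - 2)"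
    by (simp add: power2_eq_square algebra_simps)
  then have "\<epsilon> * (cmod c)\<^sup>2 \<le> 0"
    using \<epsilon> by (simp add: zero_le_mult_iff)
  then have "(cmod c)\<^sup>2 \<le> 0"
    using \<epsilon> by (simp add: mult_le_0_iff)
  then show ?thesis
    by (simp add: c_def)
qed

lemma riesz_representation:
  fixes f :: "'a::complex_hilbert \<Rightarrow> complex"
  assumes add: "\<And>x y. f (x + y) = f x + f y"
    and scale: "\<And>c x. f (scaleC c x) = c * f x"
    and bounded: "\<And>x. cmod (f x) \<le> M * norm x"
  shows "\<exists>z. \<forall>x. f x = cinner x z"
proof (cases "\<forall>x. f x = 0")
  case True
  then show ?thesis
    by (intro exI[of _ 0]) simp
next
  case False
  then obtain w where "f w \<noteq> 0"
    by auto
  have f_scaleR: "f (scaleR r x) = of_real r * f x" for r x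
    by (simp add: scaleR_scaleC scale)
  have "bounded_linear f"
    by (rule bounded_linear_intro[where K = M])
      (auto simp: add f_scaleR scaleR_conv_of_real bounded mult.commute)
  define S where "S = {x. f x = 1}"
  have "closed S"
    unfolding S_def by (intro closed_Collect_eq continuous_on_const
        linear_continuous_on \<open>bounded_linear f\<close>)
  moreover have "scaleC (1 / f w) w \<in> S"
    using \<open>f w \<noteq> 0\<close> by (simp add: S_def scale)
  moreover have "scaleR (1/2) (x + y) \<in> S" if "x \<in> S" "y \<in> S" for x y
    using that by (simp add: S_def f_scaleR add)
  ultimately obtain x0 where "x0 \<in> S" and x0_min: "\<And>u. u \<in> S \<Longrightarrow> norm x0 \<le> norm u"
    using min_norm_point_exists[of S] by blast
  have "f x0 = 1"
    using \<open>x0 \<in> S\<close> by (simp add: S_def)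
  then have "x0 \<noteq> 0"
    using add[of 0 0] by auto
  \<comment> \<open>Every \<open>x - f x \<cdot> x0\<close> lies in the kernel of \<open>f\<close>, to which \<open>x0\<close> is orthogonal.\<close>
  have "cinner x x0 = f x * cinner x0 x0" for x
  proof -
    have "norm x0 \<le> norm (x0 + scaleC t (x - scaleC (f x) x0))" for t
      using \<open>f x0 = 1\<close> add[of "x - scaleC (f x) x0" "scaleC (f x) x0"]
      by (intro x0_min) (simp add: S_def add scale)
    then have "cinner (x - scaleC (f x) x0) x0 = 0"
      by (rule cinner_eq_0_if_min_norm)
    then show ?thesis
      by (simp add: cinner_diff_left cinner_scaleC_left)
  qed
  then show ?thesis
    using \<open>x0 \<noteq> 0\<close>
    by (intro exI[of _ "scaleC (1 / cinner x0 x0) x0"])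
      (simp add: cinner_scaleC_right cinner_self_eq_power2_norm)
qed

section \<open>Adjoint and numerical radius\<close>

lemma bop_simps:
  assumes "bop A"
  shows "A (x + y) = A x + A y" "A (x - y) = A x - A y" "A (scaleR r x) = scaleR r (A x)"
    "A 0 = 0" "A (scaleC c x) = scaleC c (A x)"
  using assms unfolding bop_def by (auto simp: linear_simps)

lemma cinner_adjoint:
  assumes A: "bop (A::'a::complex_hilbert \<Rightarrow> 'a)"
  shows "cinner (A x) y = cinner x (adjoint_op A y)"
proof -
  obtain K where K: "\<And>x. norm (A x) \<le> norm x * K"
    using A bounded_linear.bounded unfolding bop_def by blast
  have "\<exists>z. \<forall>x. cinner (A x) y = cinner x z" for y
  proof (rule riesz_representation[where M = "K * norm y"])
    show "cinner (A (x + x')) y = cinner (A x) y + cinner (A x') y" for x x'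
      by (simp add: bop_simps[OF A] cinner_add_left)
    show "cinner (A (scaleC c x)) y = c * cinner (A x) y" for c x
      by (simp add: bop_simps[OF A] cinner_scaleC_left)
    show "cmod (cinner (A x) y) \<le> K * norm y * norm x" for x
      using cauchy_schwarz[of "A x" y] mult_right_mono[OF K[of x] norm_ge_zero[of y]]
      by (simp add: ac_simps)
  qed
  then have "\<exists>B. \<forall>x y. cinner (A x) y = cinner x (B y)"
    by metis
  then show ?thesis
    unfolding adjoint_op_def by (rule someI2_ex) blast
qed

lemma bounded_linear_adjoint:
  assumes A: "bop (A::'a::complex_hilbert \<Rightarrow> 'a)"
  shows "bounded_linear (adjoint_op A)"
proof -
  let ?B = "adjoint_op A"
  obtain K where K: "\<And>x. norm (A x) \<le> norm x * K" and "0 \<le> K"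
    using A bounded_linear.nonneg_bounded unfolding bop_def by blast
  show ?thesis
  proof (rule bounded_linear_intro[where K = K])
    show "?B (x + y) = ?B x + ?B y" for x y
      by (rule cinner_right_ext) (simp add: cinner_add_right flip: cinner_adjoint[OF A])
    show "?B (scaleR r x) = scaleR r (?B x)" for r x
      by (rule cinner_right_ext) (simp add: cinner_scaleR_right flip: cinner_adjoint[OF A])
    show "norm (?B y) \<le> norm y * K" for y
    proof -
      have "(norm (?B y))\<^sup>2 = Re (cinner (A (?B y)) y)"
        by (simp add: power2_norm_eq_cinner cinner_adjoint[OF A])
      also have "\<dots> \<le> norm (A (?B y)) * norm y"
        by (rule Re_cinner_le_norm_mult)
      also have "\<dots> \<le> norm (?B y) * (norm y * K)"
        using mult_right_mono[OF K[of "?B y"] norm_ge_zero[of y]] by (simp add: ac_simps)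
      finally show ?thesis
        using \<open>0 \<le> K\<close> by (cases "?B y = 0") (simp_all add: power2_eq_square)
    qed
  qed
qed

lemma bdd_above_num_radius:
  assumes A: "bop (A::'a::complex_hilbert \<Rightarrow> 'a)"
  shows "bdd_above (insert 0 {cmod (cinner (A x) x) | x. norm x = 1})"
proof -
  obtain K where K: "\<And>x. norm (A x) \<le> norm x * K"
    using A bounded_linear.bounded unfolding bop_def by blast
  have "cmod (cinner (A x) x) \<le> K" if "norm x = 1" for x
    using cauchy_schwarz[of "A x" x] K[of x] that by simp
  then show ?thesis
    by (auto intro!: bdd_aboveI[of _ "max 0 K"] simp: le_max_iff_disj)
qed

lemma num_radius_nonneg: "bop A \<Longrightarrow> 0 \<le> num_radius A"
  unfolding num_radius_def by (rule cSup_upper) (auto dest: bdd_above_num_radius)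

lemma num_radius_le:
  assumes "0 \<le> M" and "\<And>x. norm x = 1 \<Longrightarrow> cmod (cinner (A x) x) \<le> M"
  shows "num_radius A \<le> M"
  unfolding num_radius_def using assms by (auto intro!: cSup_least)

lemma cmod_cinner_le_num_radius:
  assumes A: "bop (A::'a::complex_hilbert \<Rightarrow> 'a)"
  shows "cmod (cinner (A z) z) \<le> num_radius A * (norm z)\<^sup>2"
proof (cases "z = 0")
  case False
  define u where "u = scaleR (1 / norm z) z"
  have "cmod (cinner (A z) z) / (norm z)\<^sup>2 = cmod (cinner (A u) u)"
    by (simp add: u_def bop_simps[OF A] cinner_scaleR_left cinner_scaleR_right
        power2_eq_square norm_mult norm_divide)
  also have "\<dots> \<le> num_radius A"
    unfolding num_radius_def using bdd_above_num_radius[OF A] False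
    by (auto intro!: cSup_upper simp: u_def)
  finally show ?thesis
    using False by (simp add: divide_le_eq mult.commute)
qed (simp add: bop_simps[OF A])

section \<open>Cartesian parts\<close>

text \<open>The real part of \<open>c A\<close>; \<open>re_part\<close> and \<open>im_part\<close> are the cases \<open>c = 1\<close> and \<open>c = -\<i>\<close>.\<close>
definition re_part_rot :: "complex \<Rightarrow> ('a::complex_hilbert \<Rightarrow> 'a) \<Rightarrow> 'a \<Rightarrow> 'a" where
  "re_part_rot c A x = scaleC (1/2) (scaleC c (A x) + scaleC (cnj c) (adjoint_op A x))"

lemma re_part_eq_re_part_rot: "re_part A = re_part_rot 1 A"
  by (rule ext) (simp add: re_part_def re_part_rot_def scaleC_one)

lemma im_part_eq_re_part_rot: "im_part A = re_part_rot (- \<i>) A"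
proof (rule ext)
  fix x
  define v where "v = A x - adjoint_op A x"
  have "1 / (2 * \<i>) = (1/2) * (- \<i>)"
    by (simp add: field_simps)
  then have "im_part A x = scaleC (1/2) (scaleC (- \<i>) v)"
    by (simp add: im_part_def v_def scaleC_scaleC)
  also have "scaleC (- \<i>) v = scaleC (- \<i>) (A x) + scaleC \<i> (adjoint_op A x)"
    by (simp add: v_def scaleC_diff_right scaleC_minus_left)
  finally show "im_part A x = re_part_rot (- \<i>) A x"
    by (simp add: re_part_rot_def)
qed

lemma bounded_linear_re_part_rot: "bop A \<Longrightarrow> bounded_linear (re_part_rot c A)"
  unfolding re_part_rot_def[abs_def]
  by (intro bounded_linear_compose[OF bounded_linear_scaleC] bounded_linear_add
      bounded_linear_adjoint) (auto simp: bop_def)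

lemma Re_cinner_re_part_rot_le:
  assumes A: "bop (A::'a::complex_hilbert \<Rightarrow> 'a)" and "cmod c = 1"
  shows "2 * Re (cinner (re_part_rot c A x) y) \<le> num_radius A * ((norm x)\<^sup>2 + (norm y)\<^sup>2)"
proof -
  define q where "q z = Re (c * cinner (A z) z)" for z
  have q_le: "\<bar>q z\<bar> \<le> num_radius A * (norm z)\<^sup>2" for z
    using abs_Re_le_cmod[of "c * cinner (A z) z"] cmod_cinner_le_num_radius[OF A, of z] \<open>cmod c = 1\<close>
    by (simp add: q_def norm_mult)
  \<comment> \<open>Polarization: the real part of \<open>c A\<close> is recovered from the quadratic form \<open>q\<close>.\<close>
  have "cinner (adjoint_op A x) y = cnj (cinner (A y) x)"
    by (simp add: cinner_adjoint[OF A] cinner_commute[of _ y])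
  then have "4 * Re (cinner (re_part_rot c A x) y)
      = 2 * Re (c * cinner (A x) y) + 2 * Re (c * cinner (A y) x)"
    by (simp add: re_part_rot_def cinner_scaleC_left cinner_add_left)
  also have "\<dots> = q (x + y) - q (x - y)"
    by (simp add: q_def bop_simps[OF A] cinner_add_left cinner_add_right cinner_diff_left
        cinner_diff_right algebra_simps)
  also have "\<dots> \<le> num_radius A * ((norm (x + y))\<^sup>2 + (norm (x - y))\<^sup>2)"
    using q_le[of "x + y"] q_le[of "x - y"] by (simp add: abs_le_iff algebra_simps)
  also have "\<dots> = 2 * num_radius A * ((norm x)\<^sup>2 + (norm y)\<^sup>2)"
    by (simp only: parallelogram_law) (simp add: algebra_simps)
  finally show ?thesis
    by simp
qed

lemma norm_le_if_Re_cinner_le: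
  fixes T :: "'a::complex_hilbert \<Rightarrow> 'a"
  assumes "linear T" and le: "\<And>x y. 2 * Re (cinner (T x) y) \<le> w * ((norm x)\<^sup>2 + (norm y)\<^sup>2)"
  shows "norm (T x) \<le> w * norm x"
proof (cases "T x = 0")
  case False
  define a where "a = norm (T x)"
  define b where "b = norm x"
  have "a > 0"
    using False by (simp add: a_def)
  have "b > 0"
    using False linear_0[OF \<open>linear T\<close>] by (auto simp: b_def)
  \<comment> \<open>Test against \<open>y = (b / a) T x\<close>, which has the same norm as \<open>x\<close>.\<close>
  have "2 * (b / a) * a\<^sup>2 \<le> w * (b\<^sup>2 + b\<^sup>2)"
    using le[of x "scaleR (b / a) (T x)"] \<open>a > 0\<close>
    by (simp add: cinner_scaleR_right power2_norm_eq_cinner a_def b_def)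
  then have "b * a \<le> b * (w * b)"
    using \<open>a > 0\<close> by (simp add: power2_eq_square algebra_simps)
  then show ?thesis
    using \<open>b > 0\<close> by (simp add: a_def b_def)
next
  case True
  have "0 \<le> w * (norm x)\<^sup>2"
    using le[of x 0] by simp
  then show ?thesis
    using True by (cases "x = 0") (simp_all add: zero_le_mult_iff)
qed

lemma norm_re_part_rot_le:
  assumes A: "bop A" and "cmod c = 1"
  shows "norm (re_part_rot c A x) \<le> num_radius A * norm x"
  using bounded_linear.linear[OF bounded_linear_re_part_rot[OF A]]
    Re_cinner_re_part_rot_le[OF assms] by (rule norm_le_if_Re_cinner_le)

lemma onorm_re_part_le: "bop A \<Longrightarrow> onorm (re_part A) \<le> num_radius A"
  unfolding re_part_eq_re_part_rot
  by (intro onorm_bound num_radius_nonneg norm_re_part_rot_le) auto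

lemma onorm_im_part_le: "bop A \<Longrightarrow> onorm (im_part A) \<le> num_radius A"
  unfolding im_part_eq_re_part_rot
  by (intro onorm_bound num_radius_nonneg norm_re_part_rot_le) auto

lemma power2_norm_add_power2_norm_adjoint:
  "(norm (A x))\<^sup>2 + (norm (adjoint_op A x))\<^sup>2
    = 2 * ((norm (re_part A x))\<^sup>2 + (norm (im_part A x))\<^sup>2)"
proof -
  have "(norm (re_part A x))\<^sup>2 = (norm (A x + adjoint_op A x))\<^sup>2 / 4"
    by (simp add: re_part_def norm_scaleC power_divide)
  moreover have "(norm (im_part A x))\<^sup>2 = (norm (A x - adjoint_op A x))\<^sup>2 / 4"
    by (simp add: im_part_def norm_scaleC norm_divide power_divide)
  ultimately show ?thesis
    using parallelogram_law[of "A x" "adjoint_op A x"] by simp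
qed

lemma norm_le_onorm_inv_mult_norm_adjoint:
  assumes A: "bop (A::'a::complex_hilbert \<Rightarrow> 'a)" and "bij A" and "bounded_linear (inv A)"
  shows "norm x \<le> onorm (inv A) * norm (adjoint_op A x)"
proof -
  have "(norm x)\<^sup>2 = Re (cinner (A (inv A x)) x)"
    using \<open>bij A\<close> by (simp add: bij_is_surj surj_f_inv_f power2_norm_eq_cinner)
  also have "\<dots> \<le> norm (inv A x) * norm (adjoint_op A x)"
    unfolding cinner_adjoint[OF A] by (rule Re_cinner_le_norm_mult)
  also have "\<dots> \<le> norm x * (onorm (inv A) * norm (adjoint_op A x))"
    using mult_right_mono[OF onorm[OF \<open>bounded_linear (inv A)\<close>, of x], of "norm (adjoint_op A x)"]
    by (simp add: ac_simps)
  finally show ?thesis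
    using onorm_pos_le[OF \<open>bounded_linear (inv A)\<close>]
    by (cases "x = 0") (simp_all add: power2_eq_square)
qed

lemma D_op_mult_power2_norm_le:
  assumes A: "bop (A::'a::complex_hilbert \<Rightarrow> 'a)" and "bij A" and "bounded_linear (inv A)"
    and D: "D_op A \<le> 1 / (onorm (inv A))\<^sup>2"
  shows "D_op A * (norm x)\<^sup>2 \<le> (norm (adjoint_op A x))\<^sup>2"
proof -
  define K where "K = onorm (inv A)"
  have "(norm x)\<^sup>2 \<le> (K * norm (adjoint_op A x))\<^sup>2"
    using norm_le_onorm_inv_mult_norm_adjoint[OF assms(1-3), of x] by (simp add: K_def power_mono)
  then have "(norm x)\<^sup>2 / K\<^sup>2 \<le> (norm (adjoint_op A x))\<^sup>2"
    by (cases "K = 0") (simp_all add: divide_le_eq power_mult_distrib mult.commute)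
  moreover have "D_op A * (norm x)\<^sup>2 \<le> (norm x)\<^sup>2 / K\<^sup>2"
    using mult_right_mono[OF D, of "(norm x)\<^sup>2"] by (simp add: K_def)
  ultimately show ?thesis
    by linarith
qed

lemma norm_apply_le_sqrt2_num_radius:
  assumes A: "bop (A::'a::complex_hilbert \<Rightarrow> 'a)" and "bij A" and "bounded_linear (inv A)"
    and "D_op A \<le> 1 / (onorm (inv A))\<^sup>2"
  shows "norm (A x) \<le> sqrt 2 * num_radius A * norm x"
proof -
  define a where "a = onorm (re_part A)"
  define b where "b = onorm (im_part A)"
  define w where "w = num_radius A"
  have "bounded_linear (re_part A)" "bounded_linear (im_part A)"
    using bounded_linear_re_part_rot[OF A]
    by (simp_all add: re_part_eq_re_part_rot im_part_eq_re_part_rot)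
  \<comment> \<open>The hypothesis on \<open>D_op\<close> pays for the smaller of the two Cartesian parts.\<close>
  have "(norm (A x))\<^sup>2
      \<le> 2 * ((norm (re_part A x))\<^sup>2 + (norm (im_part A x))\<^sup>2) - D_op A * (norm x)\<^sup>2"
    using power2_norm_add_power2_norm_adjoint[of A x] D_op_mult_power2_norm_le[OF assms, of x]
    by linarith
  also have "\<dots> \<le> 2 * ((a * norm x)\<^sup>2 + (b * norm x)\<^sup>2) - D_op A * (norm x)\<^sup>2"
    using onorm[OF \<open>bounded_linear (re_part A)\<close>, of x] onorm[OF \<open>bounded_linear (im_part A)\<close>, of x]
    by (intro diff_right_mono mult_left_mono add_mono power_mono) (simp_all add: a_def b_def)
  also have "\<dots> = (2 * (a\<^sup>2 + b\<^sup>2) - D_op A) * (norm x)\<^sup>2"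
    by (simp add: power_mult_distrib algebra_simps)
  also have "\<dots> = 2 * max (a\<^sup>2) (b\<^sup>2) * (norm x)\<^sup>2"
    by (simp add: D_op_def a_def b_def min_def max_def)
  also have "\<dots> \<le> 2 * w\<^sup>2 * (norm x)\<^sup>2"
  proof -
    have "a\<^sup>2 \<le> w\<^sup>2" "b\<^sup>2 \<le> w\<^sup>2"
      using onorm_re_part_le[OF A] onorm_im_part_le[OF A]
        onorm_pos_le[OF \<open>bounded_linear (re_part A)\<close>] onorm_pos_le[OF \<open>bounded_linear (im_part A)\<close>]
      by (simp_all add: a_def b_def w_def power_mono)
    then show ?thesis
      by (simp add: mult_right_mono)
  qed
  also have "\<dots> = (sqrt 2 * w * norm x)\<^sup>2"
    by (simp add: power_mult_distrib)
  finally have "(norm (A x))\<^sup>2 \<le> (sqrt 2 * w * norm x)\<^sup>2" .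
  moreover have "0 \<le> sqrt 2 * w * norm x"
    using num_radius_nonneg[OF A] by (simp add: w_def)
  ultimately show ?thesis
    unfolding w_def by (rule power2_le_imp_le)
qed

theorem corollary2p3:
  fixes R S :: "'a::complex_hilbert \<Rightarrow> 'a"
  assumes "bop R" and "bop S"
    and "bij R" and "bij S"
    and "bounded_linear (inv R)" and "bounded_linear (inv S)"
    and "D_op R \<le> 1 / (onorm (inv R))\<^sup>2"
    and "D_op S \<le> 1 / (onorm (inv S))\<^sup>2"
  shows "num_radius (R \<circ> S) \<le> 2 * num_radius R * num_radius S"
proof (rule num_radius_le)
  show "0 \<le> 2 * num_radius R * num_radius S"
    using num_radius_nonneg[OF assms(1)] num_radius_nonneg[OF assms(2)] by simp
  fix x :: 'a
  assume "norm x = 1"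
  then have "cmod (cinner ((R \<circ> S) x) x) \<le> norm (R (S x))"
    using cauchy_schwarz[of "R (S x)" x] by simp
  also have "\<dots> \<le> sqrt 2 * num_radius R * norm (S x)"
    using norm_apply_le_sqrt2_num_radius[OF assms(1,3,5,7)] .
  also have "\<dots> \<le> sqrt 2 * num_radius R * (sqrt 2 * num_radius S)"
    using norm_apply_le_sqrt2_num_radius[OF assms(2,4,6,8), of x] \<open>norm x = 1\<close>
      num_radius_nonneg[OF assms(1)] by (intro mult_left_mono) simp_all
  finally show "cmod (cinner ((R \<circ> S) x) x) \<le> 2 * num_radius R * num_radius S"
    by (simp add: ac_simps)
qed

end
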